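(* For every finite graph $G$, $\mathrm{cw}(G) \leq 2^{\mathrm{mcw}(G)}$.
   Context: A $k$-expression is built from: atoms $i(v)$ creating a vertex $v$ with label $i\in\{1,\dots,k\}$; $\eta_{i,j}$ ($i\neq j$) adding an edge between every vertex labeled $i$ and every vertex labeled $j$; $\rho_{i\to j}$ changing every label $i$ to $j$; and $\oplus$, disjoint union. The generated graph is obtained by deleting labels. The clique-width $\mathrm{cw}(G)$ is the smallest $k$ such that $G$ is generated by a $k$-expression. A multi-$k$-expression is built as follows, where each vertex carries a (possibly empty) set of labels from $\{1,\dots,k\}$: atoms $m\langle i_1,\dots,i_\ell\rangle$ (with $m$ a positive integer and $i_1<\dots<i_\ell\le k$, possibly $\ell=0$) create $m$ vertices, each with label set $\{i_1,\dots,i_\ell\}$; $\eta_{i,j}$ creates an edge between every vertex having label $i$ and every vertex having label $j$, allowed only when no vertex has both labels $i$ and $j$; $\rho_{i\to S}$ for $S\subseteq\{1,\dots,k\}$ replaces label $i$ by the set $S$ (a vertex with label set $S'\ni i$ gets $(S'\setminus\{i\})\cup S$); $\varepsilon_i$ deletes label $i$ from all vertices; $\oplus$ is disjoint union. The generated graph is obtained by deleting all labels. The multi-clique-width $\mathrm{mcw}(G)$ is the smallest $k$ such that $G$ is generated by a multi-$k$-expression. *)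

theory Defs
  imports Main
begin

definition fin_graph :: "'v set \<Rightarrow> ('v \<times> 'v) set \<Rightarrow> bool" where
  "fin_graph V E \<longleftrightarrow> finite V \<and> E \<subseteq> V \<times> V \<and> sym E \<and> (\<forall>v. (v, v) \<notin> E)"

definition graph_iso ::
  "'a set \<Rightarrow> ('a \<times> 'a) set \<Rightarrow> 'b set \<Rightarrow> ('b \<times> 'b) set \<Rightarrow> bool" where
  "graph_iso V E W F \<longleftrightarrow>
     (\<exists>f. bij_betw f V W \<and> (\<forall>u\<in>V. \<forall>v\<in>V. (u, v) \<in> E \<longleftrightarrow> (f u, f v) \<in> F))"

text \<open>Vertices created by an expression are represented canonically by their position
  in the expression tree (a list of 0/1 branch choices, plus an index for
  multi-atoms).\<close>

datatype kexp =
    KAtom nat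
  | KEta nat nat kexp
  | KRho nat nat kexp
  | KUnion kexp kexp

fun kverts :: "kexp \<Rightarrow> nat list set" where
  "kverts (KAtom i) = {[]}"
| "kverts (KEta i j e) = kverts e"
| "kverts (KRho i j e) = kverts e"
| "kverts (KUnion a b) = Cons 0 ` kverts a \<union> Cons 1 ` kverts b"

fun klab :: "kexp \<Rightarrow> nat list \<Rightarrow> nat" where
  "klab (KAtom i) = (\<lambda>v. i)"
| "klab (KEta i j e) = klab e"
| "klab (KRho i j e) = (\<lambda>v. if klab e v = i then j else klab e v)"
| "klab (KUnion a b) = (\<lambda>v. case v of 0 # w \<Rightarrow> klab a w | _ # w \<Rightarrow> klab b w | [] \<Rightarrow> 0)"

fun kedges :: "kexp \<Rightarrow> (nat list \<times> nat list) set" where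
  "kedges (KAtom i) = {}"
| "kedges (KEta i j e) = kedges e \<union>
     {(u, v). u \<in> kverts e \<and> v \<in> kverts e \<and>
              ((klab e u = i \<and> klab e v = j) \<or> (klab e u = j \<and> klab e v = i))}"
| "kedges (KRho i j e) = kedges e"
| "kedges (KUnion a b) = (\<lambda>(u, v). (0 # u, 0 # v)) ` kedges a \<union> (\<lambda>(u, v). (1 # u, 1 # v)) ` kedges b"

fun kexpr :: "nat \<Rightarrow> kexp \<Rightarrow> bool" where
  "kexpr k (KAtom i) \<longleftrightarrow> i \<in> {1..k}"
| "kexpr k (KEta i j e) \<longleftrightarrow> i \<in> {1..k} \<and> j \<in> {1..k} \<and> i \<noteq> j \<and> kexpr k e"
| "kexpr k (KRho i j e) \<longleftrightarrow> i \<in> {1..k} \<and> j \<in> {1..k} \<and> kexpr k e"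
| "kexpr k (KUnion a b) \<longleftrightarrow> kexpr k a \<and> kexpr k b"

definition cw :: "'v set \<Rightarrow> ('v \<times> 'v) set \<Rightarrow> nat" where
  "cw V E = (LEAST k. \<exists>e. kexpr k e \<and> graph_iso (kverts e) (kedges e) V E)"

datatype mexp =
    MAtom nat "nat set"
  | MEta nat nat mexp
  | MRho nat "nat set" mexp
  | MEps nat mexp
  | MUnion mexp mexp

fun mverts :: "mexp \<Rightarrow> nat list set" where
  "mverts (MAtom m S) = {[n] | n. n < m}"
| "mverts (MEta i j e) = mverts e"
| "mverts (MRho i S e) = mverts e"
| "mverts (MEps i e) = mverts e"
| "mverts (MUnion a b) = Cons 0 ` mverts a \<union> Cons 1 ` mverts b"

fun mlab :: "mexp \<Rightarrow> nat list \<Rightarrow> nat set" where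
  "mlab (MAtom m S) = (\<lambda>v. S)"
| "mlab (MEta i j e) = mlab e"
| "mlab (MRho i S e) = (\<lambda>v. if i \<in> mlab e v then (mlab e v - {i}) \<union> S else mlab e v)"
| "mlab (MEps i e) = (\<lambda>v. mlab e v - {i})"
| "mlab (MUnion a b) = (\<lambda>v. case v of 0 # w \<Rightarrow> mlab a w | _ # w \<Rightarrow> mlab b w | [] \<Rightarrow> {})"

fun medges :: "mexp \<Rightarrow> (nat list \<times> nat list) set" where
  "medges (MAtom m S) = {}"
| "medges (MEta i j e) = medges e \<union>
     {(u, v). u \<in> mverts e \<and> v \<in> mverts e \<and>
              ((i \<in> mlab e u \<and> j \<in> mlab e v) \<or> (j \<in> mlab e u \<and> i \<in> mlab e v))}"
| "medges (MRho i S e) = medges e"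
| "medges (MEps i e) = medges e"
| "medges (MUnion a b) = (\<lambda>(u, v). (0 # u, 0 # v)) ` medges a \<union> (\<lambda>(u, v). (1 # u, 1 # v)) ` medges b"

fun mexpr :: "nat \<Rightarrow> mexp \<Rightarrow> bool" where
  "mexpr k (MAtom m S) \<longleftrightarrow> 0 < m \<and> S \<subseteq> {1..k}"
| "mexpr k (MEta i j e) \<longleftrightarrow> i \<in> {1..k} \<and> j \<in> {1..k} \<and> i \<noteq> j \<and> mexpr k e \<and>
     (\<forall>v\<in>mverts e. \<not> (i \<in> mlab e v \<and> j \<in> mlab e v))"
| "mexpr k (MRho i S e) \<longleftrightarrow> i \<in> {1..k} \<and> S \<subseteq> {1..k} \<and> mexpr k e"
| "mexpr k (MEps i e) \<longleftrightarrow> i \<in> {1..k} \<and> mexpr k e"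
| "mexpr k (MUnion a b) \<longleftrightarrow> mexpr k a \<and> mexpr k b"

definition mcw :: "'v set \<Rightarrow> ('v \<times> 'v) set \<Rightarrow> nat" where
  "mcw V E = (LEAST k. \<exists>e. mexpr k e \<and> graph_iso (mverts e) (medges e) V E)"

end

(*
  A multi-k-expression is simulated by a 2^k-expression in which a vertex carries the single
  label enc S coding its label set S \<subseteq> {1..k}. Atoms and unions translate directly.
  \<eta>_{i,j} becomes the \<eta> between all codes of label sets S \<noteq> T with i \<in> S and j \<in> T; since no
  vertex carries both i and j this joins exactly the right pairs. \<rho>_{i\<rightarrow>S} and \<epsilon>_i change
  label sets by an idempotent map g, whose coded version h is realised by the renamings
  a \<rightarrow> h a for all codes a that h moves: each h a is a fixed point of h, so no vertex is
  renamed twice.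
*)

theory Submission
  imports Defs
begin

lemma graph_iso_sym:
  assumes "graph_iso V E W F"
  shows "graph_iso W F V E"
proof -
  obtain f where f: "bij_betw f V W" "\<forall>u\<in>V. \<forall>v\<in>V. (u, v) \<in> E \<longleftrightarrow> (f u, f v) \<in> F"
    using assms unfolding graph_iso_def by blast
  let ?g = "inv_into V f"
  have g: "bij_betw ?g W V"
    using f(1) by (rule bij_betw_inv_into)
  have "(u, v) \<in> F \<longleftrightarrow> (?g u, ?g v) \<in> E" if "u \<in> W" "v \<in> W" for u v
  proof -
    have "?g u \<in> V" "?g v \<in> V" "f (?g u) = u" "f (?g v) = v"
      using that f(1) g by (auto simp: bij_betw_def f_inv_into_f inv_into_into)
    then show ?thesis using f(2) by metis
  qed
  then show ?thesis unfolding graph_iso_def using g by blast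
qed

lemma graph_iso_trans:
  assumes "graph_iso V E W F" "graph_iso W F X H"
  shows "graph_iso V E X H"
proof -
  obtain f where f: "bij_betw f V W" "\<forall>u\<in>V. \<forall>v\<in>V. (u, v) \<in> E \<longleftrightarrow> (f u, f v) \<in> F"
    using assms(1) unfolding graph_iso_def by blast
  obtain g where g: "bij_betw g W X" "\<forall>u\<in>W. \<forall>v\<in>W. (u, v) \<in> F \<longleftrightarrow> (g u, g v) \<in> H"
    using assms(2) unfolding graph_iso_def by blast
  have "bij_betw (g \<circ> f) V X"
    using f(1) g(1) by (rule bij_betw_trans)
  moreover have "\<forall>u\<in>V. \<forall>v\<in>V. (u, v) \<in> E \<longleftrightarrow> ((g \<circ> f) u, (g \<circ> f) v) \<in> H"
    using f g by (auto simp: bij_betw_def)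
  ultimately show ?thesis unfolding graph_iso_def by blast
qed

fun mexp_of_kexp :: "kexp \<Rightarrow> mexp" where
  "mexp_of_kexp (KAtom i) = MAtom 1 {i}"
| "mexp_of_kexp (KEta i j e) = MEta i j (mexp_of_kexp e)"
| "mexp_of_kexp (KRho i j e) = MRho i {j} (mexp_of_kexp e)"
| "mexp_of_kexp (KUnion a b) = MUnion (mexp_of_kexp a) (mexp_of_kexp b)"

lemma mverts_mexp_of_kexp: "mverts (mexp_of_kexp e) = (\<lambda>v. v @ [0]) ` kverts e"
  by (induction e) auto

lemma mlab_mexp_of_kexp: "v \<in> kverts e \<Longrightarrow> mlab (mexp_of_kexp e) (v @ [0]) = {klab e v}"
  by (induction e arbitrary: v) auto

lemma medges_mexp_of_kexp:
  "medges (mexp_of_kexp e) = (\<lambda>(u, v). (u @ [0], v @ [0])) ` kedges e"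
proof (induction e)
  case (KEta i j e)
  then show ?case
    by (auto simp: mverts_mexp_of_kexp mlab_mexp_of_kexp image_iff)
next
  case (KUnion a b)
  then show ?case
    by (simp add: image_Un image_image split_def)
qed auto

lemma mexpr_mexp_of_kexp: "kexpr k e \<Longrightarrow> mexpr k (mexp_of_kexp e)"
  by (induction e) (auto simp: mverts_mexp_of_kexp mlab_mexp_of_kexp)

lemma graph_iso_mexp_of_kexp:
  "graph_iso (kverts e) (kedges e) (mverts (mexp_of_kexp e)) (medges (mexp_of_kexp e))"
  unfolding graph_iso_def
  by (rule exI[of _ "\<lambda>v. v @ [0]"])
     (force simp: bij_betw_def inj_on_def mverts_mexp_of_kexp medges_mexp_of_kexp)

fun keta_list :: "(nat \<times> nat) list \<Rightarrow> kexp \<Rightarrow> kexp" where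
  "keta_list [] e = e"
| "keta_list ((i, j) # ps) e = KEta i j (keta_list ps e)"

fun krho_list :: "(nat \<times> nat) list \<Rightarrow> kexp \<Rightarrow> kexp" where
  "krho_list [] e = e"
| "krho_list ((i, j) # ps) e = KRho i j (krho_list ps e)"

lemma kverts_keta_list [simp]: "kverts (keta_list ps e) = kverts e"
  by (induction ps e rule: keta_list.induct) auto

lemma klab_keta_list [simp]: "klab (keta_list ps e) = klab e"
  by (induction ps e rule: keta_list.induct) auto

lemma kedges_keta_list:
  "kedges (keta_list ps e) = kedges e \<union> {(u, v). u \<in> kverts e \<and> v \<in> kverts e \<and>
     (\<exists>(i, j)\<in>set ps. (klab e u = i \<and> klab e v = j) \<or> (klab e u = j \<and> klab e v = i))}"
  by (induction ps e rule: keta_list.induct) auto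

lemma kexpr_keta_list:
  "\<forall>(i, j)\<in>set ps. i \<in> {1..N} \<and> j \<in> {1..N} \<and> i \<noteq> j \<Longrightarrow> kexpr N e \<Longrightarrow> kexpr N (keta_list ps e)"
  by (induction ps e rule: keta_list.induct) auto

lemma kverts_krho_list [simp]: "kverts (krho_list ps e) = kverts e"
  by (induction ps e rule: krho_list.induct) auto

lemma kedges_krho_list [simp]: "kedges (krho_list ps e) = kedges e"
  by (induction ps e rule: krho_list.induct) auto

lemma kexpr_krho_list:
  "\<forall>(i, j)\<in>set ps. i \<in> {1..N} \<and> j \<in> {1..N} \<Longrightarrow> kexpr N e \<Longrightarrow> kexpr N (krho_list ps e)"
  by (induction ps e rule: krho_list.induct) auto

lemma klab_krho_list:
  assumes "\<forall>(i, j)\<in>set ps. j = h i \<and> h i \<notin> fst ` set ps"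
  shows "klab (krho_list ps e) v = (if klab e v \<in> fst ` set ps then h (klab e v) else klab e v)"
  using assms
proof (induction ps)
  case (Cons p ps)
  obtain i j where p: "p = (i, j)"
    by fastforce
  have hyp: "\<forall>(i, j)\<in>set ps. j = h i \<and> h i \<notin> fst ` set ps"
    using Cons.prems by auto
  have "h (klab e v) \<noteq> i" if "klab e v \<in> fst ` set ps"
    using Cons.prems that by (force simp: p)
  then show ?case
    using Cons.IH[OF hyp] Cons.prems by (auto simp: p)
qed simp

fun kindependent :: "nat \<Rightarrow> nat \<Rightarrow> kexp" where
  "kindependent 0 l = KAtom l"
| "kindependent (Suc n) l = KUnion (KAtom l) (kindependent n l)"

lemma finite_kverts_kindependent: "finite (kverts (kindependent n l))"
  by (induction n) auto

lemma card_kverts_kindependent: "card (kverts (kindependent n l)) = Suc n"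
proof (induction n)
  case (Suc n)
  have "Cons 0 ` {[]} \<inter> Cons 1 ` kverts (kindependent n l) = {}"
    by auto
  then show ?case
    using Suc finite_kverts_kindependent[of n l] by (simp add: card_Un_disjoint card_image)
qed simp

lemma kedges_kindependent [simp]: "kedges (kindependent n l) = {}"
  by (induction n) auto

lemma klab_kindependent: "v \<in> kverts (kindependent n l) \<Longrightarrow> klab (kindependent n l) v = l"
  by (induction n arbitrary: v) auto

lemma kexpr_kindependent: "l \<in> {1..N} \<Longrightarrow> kexpr N (kindependent n l)"
  by (induction n) auto

lemma mlab_subset: "mexpr k e \<Longrightarrow> v \<in> mverts e \<Longrightarrow> mlab e v \<subseteq> {1..k}"
proof (induction e arbitrary: v)
  case (MUnion a b)
  then show ?case by (auto simp del: atLeastAtMost_iff) blast+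
qed (auto split: if_splits)

definition simulates :: "(nat set \<Rightarrow> nat) \<Rightarrow> mexp \<Rightarrow> kexp \<Rightarrow> bool" where
  "simulates enc e e' \<longleftrightarrow> (\<exists>f. bij_betw f (mverts e) (kverts e') \<and>
     (\<forall>u\<in>mverts e. \<forall>v\<in>mverts e. (u, v) \<in> medges e \<longleftrightarrow> (f u, f v) \<in> kedges e') \<and>
     (\<forall>v\<in>mverts e. klab e' (f v) = enc (mlab e v)))"

lemma graph_iso_if_simulates:
  "simulates enc e e' \<Longrightarrow> graph_iso (mverts e) (medges e) (kverts e') (kedges e')"
  unfolding simulates_def graph_iso_def by blast

lemma simulates_atom:
  assumes "0 < m" "enc S \<in> {1..N}"
  shows "\<exists>e'. kexpr N e' \<and> simulates enc (MAtom m S) e'"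
proof -
  define e' where "e' = kindependent (m - 1) (enc S)"
  have "mverts (MAtom m S) = (\<lambda>n. [n]) ` {..<m}"
    by auto
  then have "card (mverts (MAtom m S)) = card (kverts e')" "finite (mverts (MAtom m S))"
    using \<open>0 < m\<close> by (auto simp: e'_def card_kverts_kindependent card_image inj_on_def)
  then obtain f where f: "bij_betw f (mverts (MAtom m S)) (kverts e')"
    using finite_same_card_bij finite_kverts_kindependent e'_def by metis
  then have "klab e' (f v) = enc (mlab (MAtom m S) v)" if "v \<in> mverts (MAtom m S)" for v
    using that by (simp add: e'_def klab_kindependent bij_betw_apply)
  then have "simulates enc (MAtom m S) e'"
    unfolding simulates_def using f by (auto simp: e'_def)
  moreover have "kexpr N e'"
    unfolding e'_def using assms(2) by (rule kexpr_kindependent)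
  ultimately show ?thesis by blast
qed

lemma bij_betw_Cons_image:
  assumes "bij_betw f A B" "\<And>w. w \<in> A \<Longrightarrow> g (c # w) = c # f w"
  shows "bij_betw g (Cons c ` A) (Cons c ` B)"
  using assms by (auto simp: bij_betw_def inj_on_def image_image)

lemma Cons_pair_in_image_iff:
  "(c # x, d # y) \<in> (\<lambda>(u, v). (a # u, a # v)) ` R \<longleftrightarrow> c = a \<and> d = a \<and> (x, y) \<in> R"
  by force

lemma simulates_union:
  assumes "simulates enc a a'" "simulates enc b b'"
  shows "simulates enc (MUnion a b) (KUnion a' b')"
proof -
  obtain f1 where f1: "bij_betw f1 (mverts a) (kverts a')"
    "\<forall>u\<in>mverts a. \<forall>v\<in>mverts a. (u, v) \<in> medges a \<longleftrightarrow> (f1 u, f1 v) \<in> kedges a'"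
    "\<forall>v\<in>mverts a. klab a' (f1 v) = enc (mlab a v)"
    using assms(1) unfolding simulates_def by blast
  obtain f2 where f2: "bij_betw f2 (mverts b) (kverts b')"
    "\<forall>u\<in>mverts b. \<forall>v\<in>mverts b. (u, v) \<in> medges b \<longleftrightarrow> (f2 u, f2 v) \<in> kedges b'"
    "\<forall>v\<in>mverts b. klab b' (f2 v) = enc (mlab b v)"
    using assms(2) unfolding simulates_def by blast
  define f where "f v = (if hd v = 0 then 0 # f1 (tl v) else 1 # f2 (tl v))" for v
  have f_simps [simp]: "f (0 # w) = 0 # f1 w" "f (Suc 0 # w) = Suc 0 # f2 w" for w
    by (simp_all add: f_def)
  have "bij_betw f (mverts (MUnion a b)) (kverts (KUnion a' b'))"
    unfolding mverts.simps kverts.simps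
    by (rule bij_betw_combine[OF bij_betw_Cons_image[OF f1(1)] bij_betw_Cons_image[OF f2(1)]]) auto
  moreover have "(u, v) \<in> medges (MUnion a b) \<longleftrightarrow> (f u, f v) \<in> kedges (KUnion a' b')"
    if "u \<in> mverts (MUnion a b)" "v \<in> mverts (MUnion a b)" for u v
    using that f1(2) f2(2) by (auto simp: Cons_pair_in_image_iff)
  moreover have "klab (KUnion a' b') (f v) = enc (mlab (MUnion a b) v)"
    if "v \<in> mverts (MUnion a b)" for v
    using that f1(3) f2(3) by auto
  ultimately show ?thesis
    unfolding simulates_def by blast
qed

lemma simulates_eta:
  assumes enc: "inj_on enc (Pow {1..k})" "enc ` Pow {1..k} \<subseteq> {1..N}"
    and labels: "\<forall>v\<in>mverts e. mlab e v \<subseteq> {1..k}"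
    and disjoint: "\<forall>v\<in>mverts e. \<not> (i \<in> mlab e v \<and> j \<in> mlab e v)"
    and sim: "simulates enc e e'" "kexpr N e'"
  shows "\<exists>e''. kexpr N e'' \<and> simulates enc (MEta i j e) e''"
proof -
  define Q where "Q = (\<lambda>(S, T). (enc S, enc T)) `
    {(S, T). S \<in> Pow {1..k} \<and> T \<in> Pow {1..k} \<and> i \<in> S \<and> j \<in> T \<and> S \<noteq> T}"
  have Q_iff: "(enc S, enc T) \<in> Q \<longleftrightarrow> i \<in> S \<and> j \<in> T \<and> S \<noteq> T"
    if "S \<in> Pow {1..k}" "T \<in> Pow {1..k}" for S T
    using that enc(1) by (auto simp: Q_def inj_on_eq_iff)
  have "finite Q"
    unfolding Q_def by (rule finite_imageI, rule finite_subset[of _ "Pow {1..k} \<times> Pow {1..k}"]) auto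
  then obtain ps where ps: "set ps = Q"
    using finite_list by blast
  have "\<forall>(a, b)\<in>set ps. a \<in> {1..N} \<and> b \<in> {1..N} \<and> a \<noteq> b"
    unfolding ps Q_def using enc(2) by (auto simp: inj_on_eq_iff[OF enc(1)] simp del: atLeastAtMost_iff)
  then have "kexpr N (keta_list ps e')"
    using sim(2) by (rule kexpr_keta_list)
  moreover obtain f where f: "bij_betw f (mverts e) (kverts e')"
    "\<forall>u\<in>mverts e. \<forall>v\<in>mverts e. (u, v) \<in> medges e \<longleftrightarrow> (f u, f v) \<in> kedges e'"
    "\<forall>v\<in>mverts e. klab e' (f v) = enc (mlab e v)"
    using sim(1) unfolding simulates_def by blast
  have "(f u, f v) \<in> kedges (keta_list ps e') \<longleftrightarrow> (u, v) \<in> medges (MEta i j e)"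
    if u: "u \<in> mverts e" and v: "v \<in> mverts e" for u v
  proof -
    have "(\<exists>(a, b)\<in>Q. (enc (mlab e u) = a \<and> enc (mlab e v) = b) \<or>
                       (enc (mlab e u) = b \<and> enc (mlab e v) = a))
      \<longleftrightarrow> (i \<in> mlab e u \<and> j \<in> mlab e v) \<or> (j \<in> mlab e u \<and> i \<in> mlab e v)"
      using Q_iff[of "mlab e u" "mlab e v"] Q_iff[of "mlab e v" "mlab e u"]
        labels disjoint u v by blast
    moreover have "f u \<in> kverts e'" "f v \<in> kverts e'"
      using f(1) u v by (simp_all add: bij_betw_apply)
    ultimately show ?thesis
      using f(2,3) u v by (simp add: kedges_keta_list ps)
  qed
  then have "simulates enc (MEta i j e) (keta_list ps e')"
    unfolding simulates_def using f by auto
  ultimately show ?thesis by blast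
qed

lemma simulates_relabel:
  assumes enc: "inj_on enc (Pow {1..k})" "enc ` Pow {1..k} \<subseteq> {1..N}"
    and g: "\<And>X. X \<subseteq> {1..k} \<Longrightarrow> g X \<subseteq> {1..k}" "\<And>X. X \<subseteq> {1..k} \<Longrightarrow> g (g X) = g X"
    and labels: "\<forall>v\<in>mverts e. mlab e v \<subseteq> {1..k}"
    and sim: "simulates enc e e'" "kexpr N e'"
    and e2: "mverts e2 = mverts e" "medges e2 = medges e" "\<forall>v\<in>mverts e. mlab e2 v = g (mlab e v)"
  shows "\<exists>e''. kexpr N e'' \<and> simulates enc e2 e''"
proof -
  define A where "A = enc ` Pow {1..k}"
  define h where "h a = enc (g (inv_into (Pow {1..k}) enc a))" for a
  have h_enc: "h (enc X) = enc (g X)" if "X \<subseteq> {1..k}" for X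
    using that enc(1) by (simp add: h_def)
  have h_A: "h a \<in> A" "h (h a) = h a" if "a \<in> A" for a
    using that g by (auto simp: A_def h_enc)
  define M where "M = {a \<in> A. h a \<noteq> a}"
  define ps where "ps = map (\<lambda>a. (a, h a)) (sorted_list_of_set M)"
  have "finite M"
    by (simp add: M_def A_def)
  then have sources: "fst ` set ps = M"
    by (simp add: ps_def image_image)
  have "\<forall>(a, b)\<in>set ps. b = h a \<and> h a \<notin> fst ` set ps"
    using \<open>finite M\<close> h_A by (auto simp: ps_def sources M_def)
  then have klab_ps: "klab (krho_list ps e') x = (if klab e' x \<in> M then h (klab e' x) else klab e' x)"
    for x by (simp add: klab_krho_list sources)
  have "\<forall>(a, b)\<in>set ps. a \<in> {1..N} \<and> b \<in> {1..N}"
    using \<open>finite M\<close> h_A enc(2) by (auto simp: ps_def M_def A_def simp del: atLeastAtMost_iff)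
  then have "kexpr N (krho_list ps e')"
    using sim(2) by (rule kexpr_krho_list)
  moreover obtain f where f: "bij_betw f (mverts e) (kverts e')"
    "\<forall>u\<in>mverts e. \<forall>v\<in>mverts e. (u, v) \<in> medges e \<longleftrightarrow> (f u, f v) \<in> kedges e'"
    "\<forall>v\<in>mverts e. klab e' (f v) = enc (mlab e v)"
    using sim(1) unfolding simulates_def by blast
  have "klab (krho_list ps e') (f v) = enc (mlab e2 v)" if "v \<in> mverts e" for v
    using that f(3) labels e2(3) h_enc by (auto simp: klab_ps M_def A_def)
  then have "simulates enc e2 (krho_list ps e')"
    unfolding simulates_def using f e2(1,2) by auto
  ultimately show ?thesis by blast
qed

lemma simulation_exists:
  assumes enc: "inj_on enc (Pow {1..k})" "enc ` Pow {1..k} \<subseteq> {1..N}"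
  shows "mexpr k e \<Longrightarrow> \<exists>e'. kexpr N e' \<and> simulates enc e e'"
proof (induction e)
  case (MAtom m S)
  then show ?case
    using enc(2) by (intro simulates_atom) (auto simp del: atLeastAtMost_iff)
next
  case (MEta i j e)
  then obtain e' where "kexpr N e'" "simulates enc e e'"
    by auto
  moreover have "\<forall>v\<in>mverts e. mlab e v \<subseteq> {1..k}"
    using MEta.prems mlab_subset by auto
  ultimately show ?case
    using MEta.prems by (intro simulates_eta[OF enc]) auto
next
  case (MRho i S e)
  then obtain e' where "kexpr N e'" "simulates enc e e'"
    by auto
  moreover have "\<forall>v\<in>mverts e. mlab e v \<subseteq> {1..k}"
    using MRho.prems mlab_subset by auto
  ultimately show ?case
    using MRho.prems
    by (intro simulates_relabel[OF enc, where g = "\<lambda>X. if i \<in> X then X - {i} \<union> S else X"]) auto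
next
  case (MEps i e)
  then obtain e' where "kexpr N e'" "simulates enc e e'"
    by auto
  moreover have "\<forall>v\<in>mverts e. mlab e v \<subseteq> {1..k}"
    using MEps.prems mlab_subset by auto
  ultimately show ?case
    by (intro simulates_relabel[OF enc, where g = "\<lambda>X. X - {i}"]) auto
next
  case (MUnion a b)
  then obtain a' b' where "kexpr N a'" "simulates enc a a'" "kexpr N b'" "simulates enc b b'"
    by auto
  then have "kexpr N (KUnion a' b') \<and> simulates enc (MUnion a b) (KUnion a' b')"
    by (simp add: simulates_union)
  then show ?case ..
qed

lemma cw_le:
  assumes "kexpr N e" "graph_iso (kverts e) (kedges e) V E"
  shows "cw V E \<le> N"
  unfolding cw_def using assms by (intro Least_le) blast

text \<open>The hypothesis fin_graph is not needed: if no multi-expression generates the graph,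
  then neither does any k-expression, and cw and mcw are the same junk value LEAST of the
  empty predicate.\<close>
theorem mainTheorem2:
  fixes V :: "'v set" and E :: "('v \<times> 'v) set"
  assumes "fin_graph V E"
  shows "cw V E \<le> 2 ^ mcw V E"
proof (cases "\<exists>k e. mexpr k e \<and> graph_iso (mverts e) (medges e) V E")
  case True
  define k where "k = mcw V E"
  obtain M where M: "mexpr k M" "graph_iso (mverts M) (medges M) V E"
    using LeastI_ex[OF True] unfolding k_def mcw_def by blast
  obtain enc where enc: "bij_betw enc (Pow {1..k}) {1..(2::nat) ^ k}"
    by (metis finite_same_card_bij finite_Pow_iff finite_atLeastAtMost card_Pow card_atLeastAtMost
        diff_Suc_1)
  then obtain e' where "kexpr (2 ^ k) e'" "simulates enc M e'"
    using simulation_exists[of enc k "2 ^ k" M] M(1) by (auto simp: bij_betw_def)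
  then show ?thesis
    using graph_iso_trans[OF graph_iso_sym[OF graph_iso_if_simulates] M(2)]
    unfolding k_def by (blast intro: cw_le)
next
  case False
  then have "\<not> (\<exists>e. kexpr k e \<and> graph_iso (kverts e) (kedges e) V E)" for k
    using mexpr_mexp_of_kexp graph_iso_trans[OF graph_iso_sym[OF graph_iso_mexp_of_kexp]] by blast
  with False have "cw V E = mcw V E"
    unfolding cw_def mcw_def by metis
  then show ?thesis
    by simp
qed

end
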